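(* Let $\mathcal{L}_{\mathrm{std}}=\{u,u^2,u^3,u_x,u_{xx},u_{xxx},u_{xxxx},u\cdot u_x,u\cdot u_{xx},u^2\cdot u_x\}$ and $\mathcal{L}_G^{\mathrm{theory}}=\{u_x,u_{xx},u_{xxx},u_{xxxx},u\cdot u_x\}$. Consider the family of autonomous evolution PDEs $u_t=F$ where $F$ is a real linear combination of the terms of $\mathcal{L}_{\mathrm{std}}$ (and the functions $1,u,u^2,u_x,u_{xx},u\cdot u_x$ are linearly independent on the jet space $J^{(2)}$). Then $\mathcal{L}_G^{\mathrm{theory}}$ is the unique maximal sublibrary of $\mathcal{L}_{\mathrm{std}}$ consisting of terms that can appear (with a free coefficient, or, for $u\cdot u_x$, with the fixed Galilean coefficient $-1$) in some PDE of this family admitting the Galilean generator $t\partial_x+\partial_u$: every term of $\mathcal{L}_G^{\mathrm{theory}}$ appears with nonzero coefficient in at least one Galilean-invariant PDE of the family, and no term of $\mathcal{L}_{\mathrm{std}}\setminus\mathcal{L}_G^{\mathrm{theory}}$ can appear with nonzero coefficient in any Galilean-invariant PDE of the family.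
   Context: $u=u(x,t)$ is a scalar field, subscripts denote partial derivatives. A PDE $u_t=F$ admits (is invariant under) the Galilean generator $\mathbf v=t\partial_x+\partial_u$ if the prolonged vector field $\mathrm{pr}\,\mathbf v$ annihilates $u_t-F$ on solutions; equivalently, the Galilean boost $(x,t,u)\mapsto(x+ct,t,u+c)$ maps solutions to solutions for all $c\in\mathbb R$. *)

theory Defs
  imports Complex_Main
begin

record jet =
  jx :: real
  jt :: real
  ju :: real
  ju1 :: real
  ju2 :: real
  ju3 :: real
  ju4 :: real
  jut :: real

datatype lterm = T_u | T_u2 | T_u3 | T_ux | T_uxx | T_uxxx | T_uxxxx
  | T_uux | T_uuxx | T_u2ux

fun eval_term :: "lterm \<Rightarrow> jet \<Rightarrow> real" where
  "eval_term T_u z = ju z"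
| "eval_term T_u2 z = (ju z)^2"
| "eval_term T_u3 z = (ju z)^3"
| "eval_term T_ux z = ju1 z"
| "eval_term T_uxx z = ju2 z"
| "eval_term T_uxxx z = ju3 z"
| "eval_term T_uxxxx z = ju4 z"
| "eval_term T_uux z = ju z * ju1 z"
| "eval_term T_uuxx z = ju z * ju2 z"
| "eval_term T_u2ux z = (ju z)^2 * ju1 z"

definition L_std :: "lterm set" where
  "L_std = {T_u, T_u2, T_u3, T_ux, T_uxx, T_uxxx, T_uxxxx, T_uux, T_uuxx, T_u2ux}"

definition L_G_theory :: "lterm set" where
  "L_G_theory = {T_ux, T_uxx, T_uxxx, T_uxxxx, T_uux}"

definition rhs :: "(lterm \<Rightarrow> real) \<Rightarrow> jet \<Rightarrow> real" where
  "rhs c z = (\<Sum>\<tau>\<in>L_std. c \<tau> * eval_term \<tau> z)"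

text \<open>Prolongation (to the jet coordinates above) of the Galilean boost
  (x,t,u) \<mapsto> (x + e t, t, u + e): by the chain rule, x-derivatives of u are
  unchanged and u_t becomes u_t - e u_x.\<close>
definition boost_jet :: "real \<Rightarrow> jet \<Rightarrow> jet" where
  "boost_jet e z = z\<lparr> jx := jx z + e * jt z, ju := ju z + e, jut := jut z - e * ju1 z \<rparr>"

text \<open>Prolonged vector field pr v applied to a function G on the jet space,
  as the infinitesimal generator of the prolonged boost group.\<close>
definition pr_v :: "(jet \<Rightarrow> real) \<Rightarrow> jet \<Rightarrow> real \<Rightarrow> bool" where
  "pr_v G z D \<longleftrightarrow> ((\<lambda>e. G (boost_jet e z)) has_real_derivative D) (at 0)"

definition galilean_invariant :: "(lterm \<Rightarrow> real) \<Rightarrow> bool" where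
  "galilean_invariant c \<longleftrightarrow>
     (\<forall>z. jut z = rhs c z \<longrightarrow> pr_v (\<lambda>w. jut w - rhs c w) z 0)"

end

theory Submission
  imports Defs
begin

text \<open>The boost shifts u by e and u_t by -e u_x and leaves u_x, u_xx, ... fixed, so
  pr v (u_t - F) = -(u_x + dF/du). This expression does not involve u_t, hence the
  restriction to solutions is void and invariance means that the polynomial
  u_x + dF/du vanishes identically in (u, u_x, u_xx). Since 1, u, u^2, u_x, u_xx, u u_x
  are linearly independent, this forces the coefficients of u, u^2, u^3, u u_xx, u^2 u_x
  to vanish and that of u u_x to be -1, while those of u_x, ..., u_xxxx stay free.\<close>

lemma jet2_monomials_independent:
  fixes a b c d e f :: real
  shows "(\<forall>u u1 u2. a + b * u + c * u\<^sup>2 + d * u1 + e * u2 + f * u * u1 = 0)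
     \<longleftrightarrow> a = 0 \<and> b = 0 \<and> c = 0 \<and> d = 0 \<and> e = 0 \<and> f = 0"
proof
  assume p: "\<forall>u u1 u2. a + b * u + c * u\<^sup>2 + d * u1 + e * u2 + f * u * u1 = 0"
  have a: "a = 0" using p[rule_format, of 0 0 0] by simp
  have d: "d = 0" using p[rule_format, of 0 1 0] a by simp
  have e: "e = 0" using p[rule_format, of 0 0 1] a by simp
  have "b + c = 0" "- b + c = 0"
    using p[rule_format, of 1 0 0] p[rule_format, of "-1" 0 0] a by simp_all
  then have b: "b = 0" and c: "c = 0" by linarith+
  have f: "f = 0" using p[rule_format, of 1 1 0] a b c d by simp
  show "a = 0 \<and> b = 0 \<and> c = 0 \<and> d = 0 \<and> e = 0 \<and> f = 0"
    using a b c d e f by blast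
qed simp

lemma rhs_expand:
  "rhs c z = c T_u * ju z + c T_u2 * (ju z)\<^sup>2 + c T_u3 * (ju z)^3
     + c T_ux * ju1 z + c T_uxx * ju2 z + c T_uxxx * ju3 z + c T_uxxxx * ju4 z
     + c T_uux * (ju z * ju1 z) + c T_uuxx * (ju z * ju2 z) + c T_u2ux * ((ju z)\<^sup>2 * ju1 z)"
  by (simp add: rhs_def L_std_def algebra_simps)

definition rhs_du :: "(lterm \<Rightarrow> real) \<Rightarrow> jet \<Rightarrow> real" where
  "rhs_du c z = c T_u + 2 * c T_u2 * ju z + 3 * c T_u3 * (ju z)\<^sup>2
     + c T_uux * ju1 z + c T_uuxx * ju2 z + 2 * c T_u2ux * ju z * ju1 z"

lemma rhs_boost_has_derivative:
  "((\<lambda>e. rhs c (boost_jet e z)) has_real_derivative rhs_du c z) (at 0)"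
  unfolding rhs_expand boost_jet_def rhs_du_def
  by (auto intro!: derivative_eq_intros simp: algebra_simps power2_eq_square)

lemma pr_v_galilean:
  "pr_v (\<lambda>w. jut w - rhs c w) z (- (ju1 z + rhs_du c z))"
proof -
  have "((\<lambda>e. jut z - e * ju1 z) has_real_derivative - ju1 z) (at 0)"
    by (auto intro!: derivative_eq_intros)
  then show ?thesis
    unfolding pr_v_def using rhs_boost_has_derivative[of c z]
    by (auto intro: derivative_eq_intros simp: boost_jet_def)
qed

lemma galilean_invariant_iff_rhs_du:
  "galilean_invariant c \<longleftrightarrow> (\<forall>z. ju1 z + rhs_du c z = 0)"
proof
  assume inv: "galilean_invariant c"
  show "\<forall>z. ju1 z + rhs_du c z = 0"
  proof
    fix z
    define s where "s = z\<lparr>jut := rhs c z\<rparr>"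
    have "jut s = rhs c s" by (simp add: s_def rhs_expand)
    with inv have "pr_v (\<lambda>w. jut w - rhs c w) s 0"
      unfolding galilean_invariant_def by blast
    then have "- (ju1 s + rhs_du c s) = 0"
      using pr_v_galilean[of c s] DERIV_unique unfolding pr_v_def by blast
    then show "ju1 z + rhs_du c z = 0" by (simp add: s_def rhs_du_def)
  qed
next
  assume "\<forall>z. ju1 z + rhs_du c z = 0"
  then show "galilean_invariant c"
    unfolding galilean_invariant_def using pr_v_galilean by (metis neg_0_equal_iff_equal)
qed

lemma galilean_invariant_iff_coeffs:
  "galilean_invariant c \<longleftrightarrow>
     c T_u = 0 \<and> c T_u2 = 0 \<and> c T_u3 = 0 \<and> c T_uuxx = 0 \<and> c T_u2ux = 0 \<and> c T_uux = -1"
proof -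
  let ?P = "\<lambda>u u1 u2. c T_u + 2 * c T_u2 * u + 3 * c T_u3 * u\<^sup>2
      + (1 + c T_uux) * u1 + c T_uuxx * u2 + 2 * c T_u2ux * u * u1"
  have "galilean_invariant c \<longleftrightarrow> (\<forall>z. ju1 z + rhs_du c z = 0)"
    by (rule galilean_invariant_iff_rhs_du)
  also have "\<dots> \<longleftrightarrow> (\<forall>u u1 u2. ?P u u1 u2 = 0)"
  proof
    assume jets: "\<forall>z. ju1 z + rhs_du c z = 0"
    show "\<forall>u u1 u2. ?P u u1 u2 = 0"
    proof (intro allI)
      fix u u1 u2 :: real
      have "ju1 z + rhs_du c z = 0"
        if "z = \<lparr>jx = 0, jt = 0, ju = u, ju1 = u1, ju2 = u2, ju3 = 0, ju4 = 0, jut = 0\<rparr>" for z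
        using jets by blast
      then show "?P u u1 u2 = 0" by (simp add: rhs_du_def algebra_simps)
    qed
  qed (simp add: rhs_du_def algebra_simps)
  also have "\<dots> \<longleftrightarrow>
      c T_u = 0 \<and> c T_u2 = 0 \<and> c T_u3 = 0 \<and> c T_uuxx = 0 \<and> c T_u2ux = 0 \<and> c T_uux = -1"
    unfolding jet2_monomials_independent by auto
  finally show ?thesis .
qed

theorem mainTheorem2:
  shows "L_G_theory = {\<tau> \<in> L_std. \<exists>c. galilean_invariant c \<and> c \<tau> \<noteq> 0}
         \<and> (\<forall>c. galilean_invariant c \<longrightarrow> c T_uux = -1)"
proof -
  define c0 :: "lterm \<Rightarrow> real" where
    "c0 = (\<lambda>\<tau>. if \<tau> \<in> L_G_theory then (if \<tau> = T_uux then -1 else 1) else 0)"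
  have "galilean_invariant c0"
    by (simp add: galilean_invariant_iff_coeffs c0_def L_G_theory_def)
  then have "L_G_theory \<subseteq> {\<tau> \<in> L_std. \<exists>c. galilean_invariant c \<and> c \<tau> \<noteq> 0}"
    by (auto simp: L_G_theory_def L_std_def c0_def)
  moreover have "\<tau> \<in> L_G_theory" if "galilean_invariant c" "c \<tau> \<noteq> 0" for c \<tau>
    using that by (cases \<tau>) (auto simp: galilean_invariant_iff_coeffs L_G_theory_def)
  ultimately show ?thesis
    using galilean_invariant_iff_coeffs by blast
qed

end
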